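(* Let $K$ be a field, let $\mathcal R\subset\mathbb Z^k$ be a polyhedral region, and let $f$ be a hypergeometric term on $\mathcal R$. Then the function $g\colon\mathbb Z^k\to K$ defined by $g(\vec z)=f(\vec z)$ for $\vec z\in\mathcal R$ and $g(\vec z)=0$ for $\vec z\notin\mathcal R$ is a hypergeometric term on $\mathbb Z^k$.
   Context: A half-space is $\{\vec z\in\mathbb Z^k:\vec v\cdot\vec z>n\}$ with $\vec v\in\mathbb Z^k$, $n\in\mathbb Z$; a polyhedral region is $\mathbb Z^k$ or an intersection of finitely many half-spaces. A hypergeometric term on a polyhedral region $\mathcal R$ over $K$ is a function $f\colon\mathcal R\to K$ such that for each $i\in\{1,\dots,k\}$ there are nonzero polynomials $A_i,B_i\in K[z_1,\dots,z_k]$ with $A_i(\vec z)f(\vec z)=B_i(\vec z)f(\vec z+\vec e_i)$ for all $\vec z$ with $\vec z\in\mathcal R$ and $\vec z+\vec e_i\in\mathcal R$. A hypergeometric term on $\mathbb Z^k$ is the case $\mathcal R=\mathbb Z^k$. *)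

theory Defs
  imports "HOL-Analysis.Finite_Cartesian_Product" "HOL-Library.Poly_Mapping"
begin

text \<open>Polynomials in the variables z_i (i :: 'k) over a field are finitely supported maps
  from monomials (exponent vectors 'k \<Rightarrow> nat) to coefficients.\<close>

type_synonym ('a, 'k) mpoly = "('k \<Rightarrow> nat) \<Rightarrow>\<^sub>0 'a"

definition mpoly_eval :: "('a::field, 'k::finite) mpoly \<Rightarrow> int ^ 'k \<Rightarrow> 'a" where
  "mpoly_eval p z = (\<Sum>m\<in>Poly_Mapping.keys p. Poly_Mapping.lookup p m * (\<Prod>i\<in>UNIV. of_int (z $ i) ^ m i))"

definition half_space :: "int ^ 'k::finite \<Rightarrow> int \<Rightarrow> (int ^ 'k) set" where
  "half_space v n = {z. (\<Sum>i\<in>UNIV. v $ i * z $ i) > n}"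

definition polyhedral_region :: "(int ^ 'k::finite) set \<Rightarrow> bool" where
  "polyhedral_region R \<longleftrightarrow>
     R = UNIV \<or> (\<exists>H. finite H \<and> R = (\<Inter>(v, n)\<in>H. half_space v n))"

definition hypergeometric_on :: "(int ^ 'k::finite) set \<Rightarrow> (int ^ 'k \<Rightarrow> 'a::field) \<Rightarrow> bool" where
  "hypergeometric_on R f \<longleftrightarrow>
     (\<forall>i. \<exists>A B :: ('a, 'k) mpoly. A \<noteq> 0 \<and> B \<noteq> 0 \<and>
        (\<forall>z. z \<in> R \<and> z + axis i 1 \<in> R \<longrightarrow>
              mpoly_eval A z * f z = mpoly_eval B z * f (z + axis i 1)))"

end

theory Submission
  imports Defs "HOL-Library.Function_Algebras" "HOL-Library.Indicator_Function"
begin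

text \<open>Multiply the recurrence polynomials \<open>A\<^sub>i, B\<^sub>i\<close> of \<open>f\<close> by a nonzero polynomial \<open>Q\<close>
  vanishing at every \<open>z\<close> for which exactly one of \<open>z\<close>, \<open>z + e\<^sub>i\<close> lies in \<open>R\<close>; then the
  recurrence for the zero extension holds trivially at such \<open>z\<close> and is the old one elsewhere.
  For a half-space \<open>v \<cdot> z > n\<close> such a crossing forces \<open>v \<cdot> z\<close> to lie within \<open>\<bar>v\<^sub>i\<bar>\<close> of
  \<open>n\<close>, so the product of the finitely many affine polynomials \<open>v \<cdot> z - c\<close> works; for a
  polyhedral region take the product over its half-spaces. These products are nonzero
  because multivariate polynomials over a field form a domain.\<close>

lemma poly_mapping_eq_sum_single:
  "p = (\<Sum>m\<in>Poly_Mapping.keys p. Poly_Mapping.single m (Poly_Mapping.lookup p m))"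
  by (rule poly_mapping_eqI) (simp add: lookup_sum lookup_single when_def in_keys_iff)

lemma times_poly_mapping_eq_sum_single:
  fixes p q :: "'m::monoid_add \<Rightarrow>\<^sub>0 'a::semiring_0"
  shows "p * q = (\<Sum>a\<in>Poly_Mapping.keys p. \<Sum>b\<in>Poly_Mapping.keys q.
      Poly_Mapping.single (a + b) (Poly_Mapping.lookup p a * Poly_Mapping.lookup q b))"
  by (subst poly_mapping_eq_sum_single[of p], subst poly_mapping_eq_sum_single[of q])
     (simp add: sum_distrib_left sum_distrib_right mult_single sum.swap[of _ "Poly_Mapping.keys q"])

text \<open>The leading-term argument: the product of the coefficients at the exponents
  maximal under \<open>\<psi>\<close> survives in \<open>p * q\<close>, because \<open>\<psi>\<close> is injective and additive.\<close>

lemma times_poly_mapping_nonzero_if_embedding: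
  fixes p q :: "'m::monoid_add \<Rightarrow>\<^sub>0 'a::semiring_no_zero_divisors"
    and \<psi> :: "'m \<Rightarrow> 'o::linordered_cancel_ab_semigroup_add"
  assumes "inj \<psi>" and \<psi>_add: "\<And>a b. \<psi> (a + b) = \<psi> a + \<psi> b"
    and "p \<noteq> 0" "q \<noteq> 0"
  shows "p * q \<noteq> 0"
proof -
  let ?F = "Poly_Mapping.keys p" and ?G = "Poly_Mapping.keys q"
  have "Max (\<psi> ` ?F) \<in> \<psi> ` ?F" "Max (\<psi> ` ?G) \<in> \<psi> ` ?G"
    using \<open>p \<noteq> 0\<close> \<open>q \<noteq> 0\<close> by (auto intro!: Max_in)
  then obtain a0 b0 where a0: "a0 \<in> ?F" "\<psi> a0 = Max (\<psi> ` ?F)"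
    and b0: "b0 \<in> ?G" "\<psi> b0 = Max (\<psi> ` ?G)"
    by (auto simp: image_iff)
  have a0_max: "\<psi> a \<le> \<psi> a0" if "a \<in> ?F" for a
    using that a0 by simp
  have b0_max: "\<psi> b \<le> \<psi> b0" if "b \<in> ?G" for b
    using that b0 by simp
  have unique: "a + b = a0 + b0 \<longleftrightarrow> a = a0 \<and> b = b0" if "a \<in> ?F" "b \<in> ?G" for a b
  proof
    assume "a + b = a0 + b0"
    then have sum_eq: "\<psi> a + \<psi> b = \<psi> a0 + \<psi> b0"
      by (metis \<psi>_add)
    have "\<psi> a = \<psi> a0"
    proof (rule ccontr)
      assume "\<psi> a \<noteq> \<psi> a0"
      with a0_max[OF that(1)] have "\<psi> a + \<psi> b < \<psi> a0 + \<psi> b0"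
        using b0_max[OF that(2)] by (simp add: add_less_le_mono)
      with sum_eq show False by simp
    qed
    moreover from this sum_eq have "\<psi> b = \<psi> b0" by simp
    ultimately show "a = a0 \<and> b = b0" using \<open>inj \<psi>\<close> by (simp add: inj_eq)
  qed simp
  have "Poly_Mapping.lookup (p * q) (a0 + b0) = (\<Sum>a\<in>?F. \<Sum>b\<in>?G.
      Poly_Mapping.lookup p a * Poly_Mapping.lookup q b when a = a0 when b = b0)"
    unfolding times_poly_mapping_eq_sum_single[of p q] lookup_sum lookup_single
    by (intro sum.cong refl) (auto simp: unique when_def)
  also have "\<dots> = Poly_Mapping.lookup p a0 * Poly_Mapping.lookup q b0"
    using a0 b0 by (simp add: when_def)
  also have "\<dots> \<noteq> 0"
    using a0 b0 by (simp add: in_keys_iff)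
  finally show ?thesis by auto
qed

text \<open>The target \<open>nat \<Rightarrow>\<^sub>0 nat\<close> carries the library's linear order compatible with addition.\<close>

lemma exponent_vector_embedding:
  obtains \<psi> :: "('k::finite \<Rightarrow> nat) \<Rightarrow> (nat \<Rightarrow>\<^sub>0 nat)"
  where "inj \<psi>" "\<And>a b. \<psi> (a + b) = \<psi> a + \<psi> b"
proof
  let ?J = "range (to_nat :: 'k \<Rightarrow> nat)"
  define \<psi> :: "('k \<Rightarrow> nat) \<Rightarrow> (nat \<Rightarrow>\<^sub>0 nat)" where
    "\<psi> m = Abs_poly_mapping (\<lambda>j. if j \<in> ?J then m (from_nat j) else 0)" for m
  have lookup_\<psi>: "Poly_Mapping.lookup (\<psi> m) = (\<lambda>j. if j \<in> ?J then m (from_nat j) else 0)"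
    for m
  proof -
    have "finite {j. (if j \<in> ?J then m (from_nat j) else 0) \<noteq> 0}"
      by (rule finite_subset[of _ ?J]) auto
    then show ?thesis
      unfolding \<psi>_def by (rule lookup_Abs_poly_mapping)
  qed
  show "inj \<psi>"
  proof (rule injI)
    fix a b assume "\<psi> a = \<psi> b"
    show "a = b"
    proof
      fix i :: 'k
      have "Poly_Mapping.lookup (\<psi> a) (to_nat i) = Poly_Mapping.lookup (\<psi> b) (to_nat i)"
        using \<open>\<psi> a = \<psi> b\<close> by simp
      then show "a i = b i" by (simp add: lookup_\<psi> from_nat_to_nat)
    qed
  qed
  show "\<psi> (a + b) = \<psi> a + \<psi> b" for a b
    by (rule poly_mapping_eqI) (simp add: lookup_\<psi> lookup_add)
qed

lemma mpoly_mult_nonzero: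
  fixes p q :: "('a::semiring_no_zero_divisors, 'k::finite) mpoly"
  assumes "p \<noteq> 0" "q \<noteq> 0"
  shows "p * q \<noteq> 0"
proof -
  obtain \<psi> :: "('k \<Rightarrow> nat) \<Rightarrow> (nat \<Rightarrow>\<^sub>0 nat)"
    where "inj \<psi>" "\<And>a b. \<psi> (a + b) = \<psi> a + \<psi> b"
    using exponent_vector_embedding by blast
  then show ?thesis
    using times_poly_mapping_nonzero_if_embedding assms by blast
qed

lemma mpoly_prod_nonzero:
  fixes P :: "'b \<Rightarrow> ('a::idom, 'k::finite) mpoly"
  shows "(\<And>x. x \<in> S \<Longrightarrow> P x \<noteq> 0) \<Longrightarrow> prod P S \<noteq> 0"
  by (induction S rule: infinite_finite_induct) (auto simp: mpoly_mult_nonzero)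

definition monomial_eval :: "int ^ 'k::finite \<Rightarrow> ('k \<Rightarrow> nat) \<Rightarrow> 'a::field" where
  "monomial_eval z m = (\<Prod>i\<in>UNIV. of_int (z $ i) ^ m i)"

lemma monomial_eval_add: "monomial_eval z (a + b) = monomial_eval z a * monomial_eval z b"
  by (simp add: monomial_eval_def power_add prod.distrib)

lemma monomial_eval_0: "monomial_eval z 0 = 1"
  by (simp add: monomial_eval_def)

lemma monomial_eval_indicator: "monomial_eval z (indicator {j}) = of_int (z $ j)"
  by (simp add: monomial_eval_def indicator_def of_bool_def if_distrib[of "\<lambda>n. x ^ n" for x]
      cong: if_cong)

lemma mpoly_eval_eq_sum_superset:
  assumes "finite S" "Poly_Mapping.keys p \<subseteq> S"
  shows "mpoly_eval p z = (\<Sum>m\<in>S. Poly_Mapping.lookup p m * monomial_eval z m)"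
  unfolding mpoly_eval_def monomial_eval_def
  by (rule sum.mono_neutral_left) (use assms in \<open>auto simp: in_keys_iff\<close>)

lemma mpoly_eval_0 [simp]: "mpoly_eval 0 z = 0"
  by (simp add: mpoly_eval_def)

lemma mpoly_eval_single: "mpoly_eval (Poly_Mapping.single m c) z = c * monomial_eval z m"
  by (subst mpoly_eval_eq_sum_superset[of "{m}"]) auto

lemma mpoly_eval_1: "mpoly_eval (1 :: ('a::field, 'k::finite) mpoly) z = 1"
  by (metis mpoly_eval_single monomial_eval_0 mult_1 single_one)

lemma mpoly_eval_add: "mpoly_eval (p + q) z = mpoly_eval p z + mpoly_eval q z"
proof -
  let ?S = "Poly_Mapping.keys p \<union> Poly_Mapping.keys q"
  have "mpoly_eval (p + q) z = (\<Sum>m\<in>?S. Poly_Mapping.lookup (p + q) m * monomial_eval z m)"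
    by (rule mpoly_eval_eq_sum_superset) (simp_all add: keys_add)
  also have "\<dots> = (\<Sum>m\<in>?S. Poly_Mapping.lookup p m * monomial_eval z m)
      + (\<Sum>m\<in>?S. Poly_Mapping.lookup q m * monomial_eval z m)"
    by (simp add: lookup_add distrib_right sum.distrib)
  also have "\<dots> = mpoly_eval p z + mpoly_eval q z"
    by (simp add: mpoly_eval_eq_sum_superset[symmetric])
  finally show ?thesis .
qed

lemma mpoly_eval_sum: "mpoly_eval (\<Sum>x\<in>S. p x) z = (\<Sum>x\<in>S. mpoly_eval (p x) z)"
  by (induction S rule: infinite_finite_induct) (auto simp: mpoly_eval_add)

lemma mpoly_eval_diff: "mpoly_eval (p - q) z = mpoly_eval p z - mpoly_eval q z"
  by (metis add_diff_cancel_right' eq_diff_eq mpoly_eval_add)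

lemma mpoly_eval_mult:
  "mpoly_eval ((p :: ('a::field, 'k::finite) mpoly) * q) z = mpoly_eval p z * mpoly_eval q z"
  by (simp add: times_poly_mapping_eq_sum_single[of p q] mpoly_eval_sum mpoly_eval_single
      monomial_eval_add mpoly_eval_def[of p] mpoly_eval_def[of q] monomial_eval_def[symmetric]
      sum_distrib_left sum_distrib_right mult_ac sum.swap[of _ "Poly_Mapping.keys q"])

lemma mpoly_eval_prod:
  "mpoly_eval (\<Prod>x\<in>S. (p x :: ('a::field, 'k::finite) mpoly)) z = (\<Prod>x\<in>S. mpoly_eval (p x) z)"
  by (induction S rule: infinite_finite_induct) (auto simp: mpoly_eval_1 mpoly_eval_mult)

definition dot :: "int ^ 'k::finite \<Rightarrow> int ^ 'k \<Rightarrow> int" where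
  "dot v z = (\<Sum>j\<in>UNIV. v $ j * z $ j)"

lemma dot_add_axis: "dot v (z + axis i 1) = dot v z + v $ i"
  by (simp add: dot_def axis_def ring_distribs sum.distrib if_distrib[of "\<lambda>x. v $ _ * x"]
      cong: if_cong)

lemma dot_axis: "dot (axis i 1) z = z $ i"
  by (simp add: dot_def axis_def if_distrib[of "\<lambda>x. x * _"] cong: if_cong)

lemma mem_half_space_iff: "z \<in> half_space v n \<longleftrightarrow> n < dot v z"
  by (simp add: half_space_def dot_def)

lemma half_space_crossing:
  assumes "(z \<in> half_space v n) \<noteq> (z + axis i 1 \<in> half_space v n)"
  shows "v $ i \<noteq> 0" and "dot v z \<in> {n - \<bar>v $ i\<bar>..n + \<bar>v $ i\<bar>}"
  using assms by (auto simp: mem_half_space_iff dot_add_axis)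

definition affine_mpoly :: "int ^ 'k::finite \<Rightarrow> int \<Rightarrow> ('a::field, 'k) mpoly" where
  "affine_mpoly w c = (\<Sum>j\<in>UNIV. Poly_Mapping.single (indicator {j}) (of_int (w $ j)))
     - Poly_Mapping.single 0 (of_int c)"

lemma mpoly_eval_affine:
  "mpoly_eval (affine_mpoly w c :: ('a::field, 'k::finite) mpoly) z = of_int (dot w z - c)"
  by (simp add: affine_mpoly_def dot_def mpoly_eval_diff mpoly_eval_sum mpoly_eval_single
      monomial_eval_indicator monomial_eval_0 del: single_of_int)

lemma affine_mpoly_nonzero:
  assumes "of_int (w $ i) \<noteq> (0::'a::field)"
  shows "(affine_mpoly w c :: ('a, 'k::finite) mpoly) \<noteq> 0"
proof
  assume "(affine_mpoly w c :: ('a, 'k) mpoly) = 0"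
  then have "Poly_Mapping.lookup (affine_mpoly w c :: ('a, 'k) mpoly) (indicator {i}) = 0"
    by simp
  moreover have "indicator {j} = (indicator {i} :: 'k \<Rightarrow> nat) \<longleftrightarrow> j = i" for j
    by (auto simp: indicator_def fun_eq_iff split: if_splits)
  moreover have "indicator {i} \<noteq> (0 :: 'k \<Rightarrow> nat)"
    by (auto simp: indicator_def fun_eq_iff)
  ultimately show False
    using assms by (simp add: affine_mpoly_def lookup_minus lookup_sum lookup_single when_def
        del: single_of_int)
qed

text \<open>When \<open>v $ i\<close> is zero in \<open>K\<close>, the characteristic divides \<open>v $ i\<close>; then the factor
  \<open>z $ i - c\<close> with \<open>c = z $ i mod \<bar>v $ i\<bar>\<close> vanishes at every integer point \<open>z\<close>.\<close>

definition crossing_mpoly :: "'k \<Rightarrow> int ^ 'k::finite \<Rightarrow> int \<Rightarrow> ('a::field, 'k) mpoly" where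
  "crossing_mpoly i v n =
     (if of_int (v $ i) = (0::'a) then \<Prod>c\<in>{0..<\<bar>v $ i\<bar>}. affine_mpoly (axis i 1) c
      else \<Prod>c\<in>{n - \<bar>v $ i\<bar>..n + \<bar>v $ i\<bar>}. affine_mpoly v c)"

lemma crossing_mpoly_nonzero: "(crossing_mpoly i v n :: ('a::field, 'k::finite) mpoly) \<noteq> 0"
  unfolding crossing_mpoly_def
  by (auto intro!: mpoly_prod_nonzero affine_mpoly_nonzero[where i = i] simp: axis_def)

lemma crossing_mpoly_vanishes:
  assumes "(z \<in> half_space v n) \<noteq> (z + axis i 1 \<in> half_space v n)"
  shows "mpoly_eval (crossing_mpoly i v n :: ('a::field, 'k::finite) mpoly) z = 0"
proof (cases "of_int (v $ i) = (0::'a)")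
  case True
  let ?m = "\<bar>v $ i\<bar>"
  have "?m > 0" using half_space_crossing(1)[OF assms] by simp
  have "of_int (z $ i - z $ i mod ?m) = (of_int (?m * (z $ i div ?m)) :: 'a)"
    by (simp add: minus_mod_eq_mult_div)
  also have "\<dots> = 0" using True by (simp add: abs_if)
  finally have "mpoly_eval (affine_mpoly (axis i 1) (z $ i mod ?m) :: ('a, 'k) mpoly) z = 0"
    by (simp add: mpoly_eval_affine dot_axis)
  moreover have "z $ i mod ?m \<in> {0..<?m}" using \<open>?m > 0\<close> by simp
  ultimately show ?thesis
    using True by (auto simp: crossing_mpoly_def mpoly_eval_prod prod_zero_iff)
next
  case False
  then have "mpoly_eval (affine_mpoly v (dot v z) :: ('a, 'k) mpoly) z = 0"
    by (simp add: mpoly_eval_affine)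
  with False half_space_crossing(2)[OF assms] show ?thesis
    by (auto simp: crossing_mpoly_def mpoly_eval_prod prod_zero_iff)
qed

lemma polyhedral_region_crossing_mpoly:
  assumes "polyhedral_region R"
  obtains Q :: "('a::field, 'k::finite) mpoly"
  where "Q \<noteq> 0" and "\<And>z. (z \<in> R) \<noteq> (z + axis i 1 \<in> R) \<Longrightarrow> mpoly_eval Q z = 0"
proof (cases "R = UNIV")
  case True
  then show ?thesis by (intro that[of 1]) auto
next
  case False
  then obtain H where "finite H" and R_eq: "R = (\<Inter>(v, n)\<in>H. half_space v n)"
    using assms unfolding polyhedral_region_def by blast
  define Q :: "('a, 'k) mpoly" where "Q = (\<Prod>(v, n)\<in>H. crossing_mpoly i v n)"
  show ?thesis
  proof (rule that[of Q])
    show "Q \<noteq> 0"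
      unfolding Q_def by (auto intro!: mpoly_prod_nonzero simp: crossing_mpoly_nonzero)
  next
    fix z assume "(z \<in> R) \<noteq> (z + axis i 1 \<in> R)"
    then obtain v n where "(v, n) \<in> H"
      and "(z \<in> half_space v n) \<noteq> (z + axis i 1 \<in> half_space v n)"
      unfolding R_eq by blast
    then show "mpoly_eval Q z = 0"
      using \<open>finite H\<close> crossing_mpoly_vanishes
      by (force simp: Q_def mpoly_eval_prod prod_zero_iff)
  qed
qed

theorem mainTheorem16:
  fixes R :: "(int ^ 'k::finite) set" and f :: "int ^ 'k \<Rightarrow> 'a::field"
  assumes "polyhedral_region R"
    and "hypergeometric_on R f"
  shows "hypergeometric_on UNIV (\<lambda>z. if z \<in> R then f z else 0)"
  unfolding hypergeometric_on_def
proof (intro allI)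
  fix i :: 'k
  obtain A B :: "('a, 'k) mpoly" where "A \<noteq> 0" "B \<noteq> 0" and AB:
    "\<And>z. z \<in> R \<Longrightarrow> z + axis i 1 \<in> R \<Longrightarrow>
      mpoly_eval A z * f z = mpoly_eval B z * f (z + axis i 1)"
    using assms(2) unfolding hypergeometric_on_def by blast
  obtain Q :: "('a, 'k) mpoly" where "Q \<noteq> 0"
    and Q_vanishes: "\<And>z. (z \<in> R) \<noteq> (z + axis i 1 \<in> R) \<Longrightarrow> mpoly_eval Q z = 0"
    using polyhedral_region_crossing_mpoly[OF assms(1)] by blast
  have "mpoly_eval (A * Q) z * (if z \<in> R then f z else 0) =
      mpoly_eval (B * Q) z * (if z + axis i 1 \<in> R then f (z + axis i 1) else 0)" for z
    using AB[of z] Q_vanishes[of z]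
    by (cases "z \<in> R"; cases "z + axis i 1 \<in> R") (auto simp: mpoly_eval_mult)
  moreover have "A * Q \<noteq> 0" "B * Q \<noteq> 0"
    using \<open>A \<noteq> 0\<close> \<open>B \<noteq> 0\<close> \<open>Q \<noteq> 0\<close> by (simp_all add: mpoly_mult_nonzero)
  ultimately show "\<exists>A' B' :: ('a, 'k) mpoly. A' \<noteq> 0 \<and> B' \<noteq> 0 \<and>
    (\<forall>z. z \<in> UNIV \<and> z + axis i 1 \<in> UNIV \<longrightarrow>
      mpoly_eval A' z * (if z \<in> R then f z else 0) =
      mpoly_eval B' z * (if z + axis i 1 \<in> R then f (z + axis i 1) else 0))"
    by blast
qed

end
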